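(* Assume $L$ is irreducible and $p\gg0$. Let $\theta\gg0$ with $L\theta=0$ and $\sum_i\theta_i=1$. Then there exist constants $0<m\le M$ such that $m\theta\le w^*(\mu,p)\le M\theta$ for all $\mu>0$; moreover $$\lim_{\mu\to0^+}w^*(\mu,p)=p\qquad\text{and}\qquad\lim_{\mu\to\infty}w^*(\mu,p)=\frac{\sum_{i=1}^n\theta_ip_i}{\sum_{i=1}^n\theta_i^2}\,\theta .$$
   Context: Let $n\ge2$ and $A=(a_{ij})_{n\times n}$ with $a_{ij}\ge0$ for $i\ne j$. The connection matrix $L$ has $L_{ij}=a_{ij}$ for $i\ne j$, $L_{ii}=-\sum_{k\ne i}a_{ki}$. For $\mu>0$ and $r\gg0$, $w^*(\mu,r)\gg0$ denotes the unique positive equilibrium of the single-species patch model $w_i'=\mu\sum_{j=1}^nL_{ij}w_j+w_i(r_i-w_i)$, $i=1,\dots,n$ (it exists and is globally asymptotically stable in $\mathbb R^n_+\setminus\{0\}$ when $L$ is irreducible). Inequalities between vectors are componentwise. *)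

theory Defs
  imports "HOL-Analysis.Analysis"
begin

definition connection_matrix :: "real^'n^'n \<Rightarrow> real^'n^'n" where
  "connection_matrix A = (\<chi> i j. if i = j then - (\<Sum>k\<in>UNIV - {i}. A $ k $ i) else A $ i $ j)"

text \<open>Irreducible matrix: there is no nonempty proper index set S with
  M i j = 0 for all i in S and j not in S (i.e. M is not permutation-similar
  to a block triangular matrix).\<close>
definition irreducible_mat :: "real^'n^'n \<Rightarrow> bool" where
  "irreducible_mat M \<longleftrightarrow>
     \<not> (\<exists>S::'n set. S \<noteq> {} \<and> S \<noteq> UNIV \<and> (\<forall>i\<in>S. \<forall>j\<in>UNIV - S. M $ i $ j = 0))"

definition strictly_pos :: "real^'n \<Rightarrow> bool" where
  "strictly_pos x \<longleftrightarrow> (\<forall>i. x $ i > 0)"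

text \<open>Equilibrium of w_i' = mu * sum_j L_ij w_j + w_i (r_i - w_i).\<close>
definition is_equilibrium :: "real^'n^'n \<Rightarrow> real \<Rightarrow> real^'n \<Rightarrow> real^'n \<Rightarrow> bool" where
  "is_equilibrium L \<mu> r w \<longleftrightarrow>
     (\<forall>i. \<mu> * (\<Sum>j\<in>UNIV. L $ i $ j * w $ j) + w $ i * (r $ i - w $ i) = 0)"

definition wstar :: "real^'n^'n \<Rightarrow> real \<Rightarrow> real^'n \<Rightarrow> real^'n" where
  "wstar L \<mu> r = (THE w. strictly_pos w \<and> is_equilibrium L \<mu> r w)"

end

theory Submission
  imports Defs
begin

text \<open>Positive equilibria are compared through the ratios w/\<theta>: at an index where such a ratio
  is extremal, the Metzler structure of L fixes the sign of the diffusion term there. This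
  gives min(p/\<theta>) \<theta> \<le> w \<le> max(p/\<theta>) \<theta>, uniqueness of the positive equilibrium, and, via
  Brouwer's theorem on that box, its existence. As \<mu> \<rightarrow> 0 the diffusion term is O(\<mu>), so
  w \<rightarrow> p. As \<mu> \<rightarrow> \<infinity> the equilibrium equation forces L w = O(1/\<mu>); irreducibility makes
  ker L the span of \<theta>, so w is within O(1/\<mu>) of (\<Sigma> w) \<theta>, and since the columns of L sum to
  zero, \<Sigma> w_i (p_i - w_i) = 0, which determines the limit of \<Sigma> w.\<close>

definition metzler :: "real^'n^'n \<Rightarrow> bool" where
  "metzler L \<longleftrightarrow> (\<forall>i j. i \<noteq> j \<longrightarrow> 0 \<le> L$i$j)"

definition patch_field :: "real^'n^'n \<Rightarrow> real \<Rightarrow> real^'n \<Rightarrow> real^'n \<Rightarrow> real^'n" where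
  "patch_field L \<mu> r w = (\<chi> i. \<mu> * (L *v w)$i + w$i * (r$i - w$i))"

lemma metzler_connection_matrix:
  assumes "\<forall>i j. i \<noteq> j \<longrightarrow> 0 \<le> A$i$j"
  shows "metzler (connection_matrix A)"
  using assms by (simp add: metzler_def connection_matrix_def)

lemma column_sum_connection_matrix:
  "(\<Sum>i\<in>UNIV. connection_matrix A $ i $ j) = 0"
proof -
  have "(\<Sum>i\<in>UNIV - {j}. connection_matrix A $ i $ j) = (\<Sum>i\<in>UNIV - {j}. A $ i $ j)"
    by (rule sum.cong) (auto simp: connection_matrix_def)
  then show ?thesis
    by (simp add: sum.remove[of UNIV j] connection_matrix_def)
qed

lemma sum_matrix_vector_mult_eq_0:
  fixes L :: "real^'n^'n"
  assumes "\<And>j. (\<Sum>i\<in>UNIV. L$i$j) = 0"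
  shows "(\<Sum>i\<in>UNIV. (L *v v)$i) = 0"
proof -
  have "(\<Sum>i\<in>UNIV. (L *v v)$i) = (\<Sum>i\<in>UNIV. \<Sum>j\<in>UNIV. L$i$j * v$j)"
    by (simp add: matrix_vector_mult_def)
  also have "\<dots> = (\<Sum>j\<in>UNIV. (\<Sum>i\<in>UNIV. L$i$j) * v$j)"
    by (subst sum.swap) (simp add: sum_distrib_right)
  finally show ?thesis
    using assms by simp
qed

lemma is_equilibrium_iff_patch_field:
  "is_equilibrium L \<mu> r w \<longleftrightarrow> patch_field L \<mu> r w = 0"
  by (simp add: is_equilibrium_def patch_field_def matrix_vector_mult_def vec_eq_iff)

lemma is_equilibrium_iff:
  "is_equilibrium L \<mu> r w \<longleftrightarrow> (\<forall>i. \<mu> * (L *v w)$i = w$i * (w$i - r$i))"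
  unfolding is_equilibrium_iff_patch_field patch_field_def vec_eq_iff
  by (simp add: right_diff_distrib add_eq_0_iff2 eq_neg_iff_add_eq_0 algebra_simps)

lemma is_equilibrium_abs_diffusion:
  assumes "is_equilibrium L \<mu> r w" and "0 \<le> \<mu>" and "0 \<le> w$i"
  shows "\<mu> * \<bar>(L *v w)$i\<bar> = w$i * \<bar>w$i - r$i\<bar>"
proof -
  have "\<bar>\<mu> * (L *v w)$i\<bar> = \<bar>w$i * (w$i - r$i)\<bar>"
    using assms(1) by (simp add: is_equilibrium_iff)
  with assms(2,3) show ?thesis
    by (simp add: abs_mult)
qed

lemma metzler_diag_le_row:
  assumes "metzler L" and "\<And>j. 0 \<le> z$j"
  shows "L$i$i * z$i \<le> (L *v z)$i"
proof -
  have "0 \<le> (\<Sum>j\<in>UNIV - {i}. L$i$j * z$j)"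
    using assms by (intro sum_nonneg) (auto simp: metzler_def)
  then show ?thesis
    by (simp add: matrix_vector_mult_def sum.remove[of UNIV i])
qed

text \<open>A maximum principle: with k the maximum of v/\<theta>, the vector k \<theta> - v is nonnegative and
  vanishes at a maximising index i, so by the Metzler property (L (k \<theta> - v)) i \<ge> 0.\<close>
lemma metzler_max_ratio:
  fixes L :: "real^'n^'n"
  assumes L: "metzler L" and \<theta>: "strictly_pos \<theta>"
  obtains i where "\<And>j. v$j * \<theta>$i \<le> v$i * \<theta>$j"
    and "\<theta>$i * (L *v v)$i \<le> v$i * (L *v \<theta>)$i"
proof -
  have \<theta>_pos: "0 < \<theta>$j" for j using \<theta> by (simp add: strictly_pos_def)
  let ?q = "\<lambda>j. v$j / \<theta>$j"
  define k where "k = Max (range ?q)"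
  have "k \<in> range ?q" unfolding k_def by (intro Max_in) auto
  then obtain i where i: "k = ?q i" by auto
  have v_le: "v$j \<le> k * \<theta>$j" for j
  proof -
    have "?q j \<le> k" unfolding k_def by (intro Max_ge) auto
    then show ?thesis using \<theta>_pos[of j] by (simp add: pos_divide_le_eq)
  qed
  have v_i: "v$i = k * \<theta>$i"
    using \<theta>_pos[of i] by (simp add: i)
  have "L$i$i * (k *\<^sub>R \<theta> - v)$i \<le> (L *v (k *\<^sub>R \<theta> - v))$i"
    using v_le by (intro metzler_diag_le_row[OF L]) simp
  then have "(L *v v)$i \<le> k * (L *v \<theta>)$i"
    using v_i by (simp add: matrix_vector_mult_diff_distrib matrix_vector_mult_scaleR)
  then have row: "\<theta>$i * (L *v v)$i \<le> v$i * (L *v \<theta>)$i"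
    using mult_left_mono[of _ _ "\<theta>$i"] \<theta>_pos[of i] by (fastforce simp: v_i mult_ac)
  have "v$j * \<theta>$i \<le> v$i * \<theta>$j" for j
    using mult_right_mono[OF v_le[of j], of "\<theta>$i"] \<theta>_pos[of i] by (simp add: v_i mult_ac)
  with row that show thesis by blast
qed

lemma metzler_min_ratio:
  fixes L :: "real^'n^'n"
  assumes "metzler L" and "strictly_pos \<theta>"
  obtains i where "\<And>j. v$i * \<theta>$j \<le> v$j * \<theta>$i"
    and "v$i * (L *v \<theta>)$i \<le> \<theta>$i * (L *v v)$i"
proof -
  obtain i where "\<And>j. (- v)$j * \<theta>$i \<le> (- v)$i * \<theta>$j"
    and "\<theta>$i * (L *v (- v))$i \<le> (- v)$i * (L *v \<theta>)$i"
    using metzler_max_ratio[OF assms] by blast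
  then have "\<And>j. v$i * \<theta>$j \<le> v$j * \<theta>$i" "v$i * (L *v \<theta>)$i \<le> \<theta>$i * (L *v v)$i"
    by (simp_all add: matrix_vector_mult_diff_distrib[of L 0, simplified])
  then show thesis by (rule that)
qed

lemma positive_equilibrium_le:
  fixes L :: "real^'n^'n"
  assumes L: "metzler L" and ker: "L *v \<theta> = 0" and \<theta>: "strictly_pos \<theta>" and \<mu>: "0 \<le> \<mu>"
    and eq: "is_equilibrium L \<mu> r w" and w: "strictly_pos w"
    and r_le: "\<And>i. r$i \<le> M * \<theta>$i"
  shows "w$j \<le> M * \<theta>$j"
proof -
  obtain i where ratio: "\<And>j. w$j * \<theta>$i \<le> w$i * \<theta>$j"
    and row: "\<theta>$i * (L *v w)$i \<le> w$i * (L *v \<theta>)$i"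
    using metzler_max_ratio[OF L \<theta>] by blast
  have \<theta>_pos: "0 < \<theta>$k" and w_pos: "0 < w$k" for k
    using \<theta> w by (simp_all add: strictly_pos_def)
  have "(L *v w)$i \<le> 0"
    using row ker \<theta>_pos[of i] by (simp add: mult_le_0_iff)
  then have "\<mu> * (L *v w)$i \<le> 0"
    using \<mu> by (simp add: mult_nonneg_nonpos)
  then have "w$i * (w$i - r$i) \<le> 0"
    using eq by (simp add: is_equilibrium_iff)
  then have "w$i \<le> r$i"
    using w_pos[of i] by (simp add: mult_le_0_iff)
  have "w$j * \<theta>$i \<le> w$i * \<theta>$j" by (fact ratio)
  also have "\<dots> \<le> r$i * \<theta>$j"
    using \<open>w$i \<le> r$i\<close> \<theta>_pos[of j] by (simp add: mult_right_mono)
  also have "\<dots> \<le> (M * \<theta>$i) * \<theta>$j"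
    using r_le[of i] \<theta>_pos[of j] by (simp add: mult_right_mono)
  finally have "w$j * \<theta>$i \<le> (M * \<theta>$j) * \<theta>$i"
    by (simp add: mult_ac)
  then show ?thesis
    using \<theta>_pos[of i] by simp
qed

lemma positive_equilibrium_ge:
  fixes L :: "real^'n^'n"
  assumes L: "metzler L" and ker: "L *v \<theta> = 0" and \<theta>: "strictly_pos \<theta>" and \<mu>: "0 \<le> \<mu>"
    and eq: "is_equilibrium L \<mu> r w" and w: "strictly_pos w"
    and r_ge: "\<And>i. m * \<theta>$i \<le> r$i"
  shows "m * \<theta>$j \<le> w$j"
proof -
  obtain i where ratio: "\<And>j. w$i * \<theta>$j \<le> w$j * \<theta>$i"
    and row: "w$i * (L *v \<theta>)$i \<le> \<theta>$i * (L *v w)$i"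
    using metzler_min_ratio[OF L \<theta>] by blast
  have \<theta>_pos: "0 < \<theta>$k" and w_pos: "0 < w$k" for k
    using \<theta> w by (simp_all add: strictly_pos_def)
  have "0 \<le> (L *v w)$i"
    using row ker \<theta>_pos[of i] by (simp add: zero_le_mult_iff)
  then have "0 \<le> \<mu> * (L *v w)$i"
    using \<mu> by simp
  then have "0 \<le> w$i * (w$i - r$i)"
    using eq by (simp add: is_equilibrium_iff)
  then have "r$i \<le> w$i"
    using w_pos[of i] by (simp add: zero_le_mult_iff)
  have "(m * \<theta>$i) * \<theta>$j \<le> r$i * \<theta>$j"
    using r_ge[of i] \<theta>_pos[of j] by (simp add: mult_right_mono)
  also have "\<dots> \<le> w$i * \<theta>$j"
    using \<open>r$i \<le> w$i\<close> \<theta>_pos[of j] by (simp add: mult_right_mono)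
  also have "\<dots> \<le> w$j * \<theta>$i" by (fact ratio)
  finally have "(m * \<theta>$j) * \<theta>$i \<le> w$j * \<theta>$i"
    by (simp add: mult_ac)
  then show ?thesis
    using \<theta>_pos[of i] by simp
qed

text \<open>At the maximum of v/w the logistic term forces v i \<le> w i, hence v \<le> w everywhere.\<close>
lemma positive_equilibria_le:
  fixes L :: "real^'n^'n"
  assumes L: "metzler L" and \<mu>: "0 < \<mu>"
    and eq_v: "is_equilibrium L \<mu> r v" and v: "strictly_pos v"
    and eq_w: "is_equilibrium L \<mu> r w" and w: "strictly_pos w"
  shows "v$j \<le> w$j"
proof -
  obtain i where ratio: "\<And>j. v$j * w$i \<le> v$i * w$j"
    and row: "w$i * (L *v v)$i \<le> v$i * (L *v w)$i"
    using metzler_max_ratio[OF L w] by blast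
  have v_pos: "0 < v$k" and w_pos: "0 < w$k" for k
    using v w by (simp_all add: strictly_pos_def)
  have e_v: "\<mu> * (L *v v)$i = v$i * (v$i - r$i)" and e_w: "\<mu> * (L *v w)$i = w$i * (w$i - r$i)"
    using eq_v eq_w by (simp_all add: is_equilibrium_iff)
  have "w$i * (\<mu> * (L *v v)$i) \<le> v$i * (\<mu> * (L *v w)$i)"
    using mult_left_mono[OF row, of \<mu>] \<mu> by (simp add: mult_ac)
  then have "(v$i * w$i) * (v$i - r$i) \<le> (v$i * w$i) * (w$i - r$i)"
    unfolding e_v e_w by (simp add: mult_ac)
  then have "v$i \<le> w$i"
    using v_pos[of i] w_pos[of i] by simp
  have "v$j * w$i \<le> v$i * w$j" by (fact ratio)
  also have "\<dots> \<le> w$i * w$j"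
    using \<open>v$i \<le> w$i\<close> w_pos[of j] by (simp add: mult_right_mono)
  finally show ?thesis
    using w_pos[of i] by (simp add: mult.commute)
qed

lemma patch_field_le_upper:
  fixes L :: "real^'n^'n"
  assumes L: "metzler L" and ker: "L *v \<theta> = 0" and \<mu>: "0 \<le> \<mu>"
    and r_le: "r$i \<le> M * \<theta>$i" and w_le: "\<And>j. w$j \<le> M * \<theta>$j" and w_nonneg: "0 \<le> w$i"
  shows "patch_field L \<mu> r w $ i \<le> (\<mu> * \<bar>L$i$i\<bar> + w$i) * (M * \<theta>$i - w$i)"
proof -
  let ?d = "M * \<theta>$i - w$i"
  have "L$i$i * ?d \<le> (L *v (M *\<^sub>R \<theta> - w))$i"
    using metzler_diag_le_row[OF L, of "M *\<^sub>R \<theta> - w" i] w_le by simp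
  then have "(L *v w)$i \<le> - L$i$i * ?d"
    using ker by (simp add: matrix_vector_mult_diff_distrib matrix_vector_mult_scaleR)
  also have "\<dots> \<le> \<bar>L$i$i\<bar> * ?d"
    using w_le[of i] by (intro mult_right_mono) auto
  finally have "\<mu> * (L *v w)$i \<le> \<mu> * (\<bar>L$i$i\<bar> * ?d)"
    using \<mu> by (rule mult_left_mono)
  moreover have "w$i * (r$i - w$i) \<le> w$i * ?d"
    using r_le w_nonneg by (intro mult_left_mono) auto
  ultimately show ?thesis
    by (simp add: patch_field_def algebra_simps)
qed

lemma patch_field_ge_lower:
  fixes L :: "real^'n^'n"
  assumes L: "metzler L" and ker: "L *v \<theta> = 0" and \<mu>: "0 \<le> \<mu>"
    and r_ge: "m * \<theta>$i \<le> r$i" and w_ge: "\<And>j. m * \<theta>$j \<le> w$j" and w_nonneg: "0 \<le> w$i"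
  shows "- ((\<mu> * \<bar>L$i$i\<bar> + w$i) * (w$i - m * \<theta>$i)) \<le> patch_field L \<mu> r w $ i"
proof -
  let ?d = "w$i - m * \<theta>$i"
  have "- \<bar>L$i$i\<bar> * ?d \<le> L$i$i * ?d"
    using w_ge[of i] by (intro mult_right_mono) auto
  also have "\<dots> \<le> (L *v (w - m *\<^sub>R \<theta>))$i"
    using metzler_diag_le_row[OF L, of "w - m *\<^sub>R \<theta>" i] w_ge by simp
  also have "\<dots> = (L *v w)$i"
    using ker by (simp add: matrix_vector_mult_diff_distrib matrix_vector_mult_scaleR)
  finally have "\<mu> * (- \<bar>L$i$i\<bar> * ?d) \<le> \<mu> * (L *v w)$i"
    using \<mu> by (rule mult_left_mono)
  moreover have "w$i * (- ?d) \<le> w$i * (r$i - w$i)"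
    using r_ge w_nonneg by (intro mult_left_mono) auto
  ultimately show ?thesis
    by (simp add: patch_field_def algebra_simps)
qed

text \<open>The step size 1/c is small enough that the inward pointing of the field on the faces of
  the box is not overshot.\<close>
lemma euler_step_mem_box:
  fixes L :: "real^'n^'n"
  assumes L: "metzler L" and ker: "L *v \<theta> = 0" and \<theta>: "strictly_pos \<theta>" and \<mu>: "0 \<le> \<mu>"
    and m: "0 < m" and r_bounds: "\<And>i. m * \<theta>$i \<le> r$i \<and> r$i \<le> M * \<theta>$i"
    and c: "\<And>i. \<mu> * \<bar>L$i$i\<bar> + M * \<theta>$i \<le> c"
    and w: "w \<in> cbox (m *\<^sub>R \<theta>) (M *\<^sub>R \<theta>)"
  shows "w + (1 / c) *\<^sub>R patch_field L \<mu> r w \<in> cbox (m *\<^sub>R \<theta>) (M *\<^sub>R \<theta>)"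
proof -
  have w_bounds: "m * \<theta>$j \<le> w$j" "w$j \<le> M * \<theta>$j" for j
    using w by (simp_all add: mem_box_cart)
  have w_pos: "0 < w$j" for j
  proof -
    have "0 < m * \<theta>$j"
      using m \<theta> by (simp add: strictly_pos_def)
    then show ?thesis
      using w_bounds(1)[of j] by linarith
  qed
  have "m * \<theta>$i \<le> w$i + patch_field L \<mu> r w $ i / c \<and> w$i + patch_field L \<mu> r w $ i / c \<le> M * \<theta>$i"
    for i
  proof -
    define k where "k = (\<mu> * \<bar>L$i$i\<bar> + w$i) / c"
    have c_pos: "0 < c"
      using c[of i] w_bounds(2)[of i] w_pos[of i] \<mu> by (smt (verit) abs_ge_zero mult_nonneg_nonneg)
    have k: "0 \<le> k" "k \<le> 1"
      using c[of i] c_pos w_bounds(2)[of i] w_pos[of i] \<mu> by (simp_all add: k_def)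
    have "patch_field L \<mu> r w $ i / c \<le> k * (M * \<theta>$i - w$i)"
      using patch_field_le_upper[OF L ker \<mu> r_bounds[THEN conjunct2] w_bounds(2)] w_pos[of i] c_pos
      by (simp add: k_def divide_right_mono)
    also have "\<dots> \<le> M * \<theta>$i - w$i"
      using k w_bounds(2)[of i] by (intro mult_left_le_one_le) auto
    finally have up: "w$i + patch_field L \<mu> r w $ i / c \<le> M * \<theta>$i" by simp
    have "- (w$i - m * \<theta>$i) \<le> - (k * (w$i - m * \<theta>$i))"
      using mult_left_le_one_le[of "w$i - m * \<theta>$i" k] k w_bounds(1)[of i] by linarith
    also have "\<dots> \<le> patch_field L \<mu> r w $ i / c"
      using patch_field_ge_lower[OF L ker \<mu> r_bounds[THEN conjunct1] w_bounds(1)] w_pos[of i] c_pos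
      by (simp add: k_def) (metis divide_right_mono less_imp_le minus_divide_left)
    finally have "m * \<theta>$i \<le> w$i + patch_field L \<mu> r w $ i / c" by simp
    with up show ?thesis by blast
  qed
  then show ?thesis
    by (simp add: mem_box_cart)
qed

lemma positive_equilibrium_exists:
  fixes L :: "real^'n^'n"
  assumes L: "metzler L" and ker: "L *v \<theta> = 0" and \<theta>: "strictly_pos \<theta>" and \<mu>: "0 \<le> \<mu>"
    and m: "0 < m" and r_bounds: "\<And>i. m * \<theta>$i \<le> r$i \<and> r$i \<le> M * \<theta>$i"
  obtains w where "strictly_pos w" and "is_equilibrium L \<mu> r w"
proof -
  let ?S = "cbox (m *\<^sub>R \<theta>) (M *\<^sub>R \<theta>)"
  define c where "c = 1 + (\<Sum>i\<in>UNIV. \<mu> * \<bar>L$i$i\<bar> + M * \<theta>$i)"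
  define f where "f w = w + (1 / c) *\<^sub>R patch_field L \<mu> r w" for w
  have \<theta>_pos: "0 < \<theta>$i" for i
    using \<theta> by (simp add: strictly_pos_def)
  have terms_nonneg: "0 \<le> \<mu> * \<bar>L$i$i\<bar> + M * \<theta>$i" for i
    using r_bounds[of i] m \<theta>_pos[of i] mult_pos_pos[of m "\<theta>$i"] \<mu> by (smt (verit) abs_ge_zero mult_nonneg_nonneg)
  have "\<mu> * \<bar>L$i$i\<bar> + M * \<theta>$i \<le> c" for i
    using member_le_sum[of i UNIV "\<lambda>i. \<mu> * \<bar>L$i$i\<bar> + M * \<theta>$i"] terms_nonneg by (simp add: c_def)
  then have f_S: "f \<in> ?S \<rightarrow> ?S"
    unfolding f_def using euler_step_mem_box[OF L ker \<theta> \<mu> m r_bounds] by blast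
  have "continuous_on ?S f"
    unfolding f_def patch_field_def by (intro continuous_intros)
  moreover have "m *\<^sub>R \<theta> \<in> ?S"
    using r_bounds by (simp add: mem_box_cart) (meson order_trans)
  ultimately obtain w where w: "w \<in> ?S" and "f w = w"
    using brouwer[of ?S f] f_S by auto
  moreover have "0 < c"
    using terms_nonneg by (simp add: c_def sum_nonneg add_pos_nonneg)
  ultimately have "is_equilibrium L \<mu> r w"
    by (simp add: f_def is_equilibrium_iff_patch_field)
  moreover have "strictly_pos w"
    using w m \<theta>_pos by (auto simp: mem_box_cart strictly_pos_def intro: less_le_trans[OF mult_pos_pos])
  ultimately show thesis
    using that by blast
qed

lemma strictly_pos_ratio_bounds:
  fixes \<theta> r :: "real^'n"
  assumes \<theta>: "strictly_pos \<theta>" and r: "strictly_pos r"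
  obtains m M where "0 < m" and "m \<le> M" and "\<And>i. m * \<theta>$i \<le> r$i \<and> r$i \<le> M * \<theta>$i"
proof -
  let ?q = "\<lambda>i. r$i / \<theta>$i"
  define m where "m = Min (range ?q)"
  define M where "M = Max (range ?q)"
  have \<theta>_pos: "0 < \<theta>$i" and r_pos: "0 < r$i" for i
    using \<theta> r by (simp_all add: strictly_pos_def)
  have "m \<in> range ?q" unfolding m_def by (intro Min_in) auto
  then have m_pos: "0 < m" using \<theta>_pos r_pos by auto
  have q: "m \<le> ?q i" "?q i \<le> M" for i
    unfolding m_def M_def by (intro Min_le Max_ge; simp)+
  have "m * \<theta>$i \<le> r$i \<and> r$i \<le> M * \<theta>$i" for i
    using q[of i] \<theta>_pos[of i] by (simp add: pos_le_divide_eq pos_divide_le_eq)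
  moreover have "m \<le> M"
    using q[of undefined] by linarith
  ultimately show thesis
    using that m_pos by blast
qed

lemma wstar_positive_equilibrium:
  fixes L :: "real^'n^'n"
  assumes L: "metzler L" and ker: "L *v \<theta> = 0" and \<theta>: "strictly_pos \<theta>"
    and r: "strictly_pos r" and \<mu>: "0 < \<mu>"
  shows "strictly_pos (wstar L \<mu> r) \<and> is_equilibrium L \<mu> r (wstar L \<mu> r)"
proof -
  obtain m M where "0 < m" "\<And>i. m * \<theta>$i \<le> r$i \<and> r$i \<le> M * \<theta>$i"
    using strictly_pos_ratio_bounds[OF \<theta> r] by blast
  then obtain w where w: "strictly_pos w" "is_equilibrium L \<mu> r w"
    using positive_equilibrium_exists[OF L ker \<theta>] \<mu> by (metis less_imp_le)
  have "\<exists>!w. strictly_pos w \<and> is_equilibrium L \<mu> r w"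
  proof (rule ex1I)
    show "strictly_pos w \<and> is_equilibrium L \<mu> r w" using w ..
  next
    fix v assume "strictly_pos v \<and> is_equilibrium L \<mu> r v"
    then show "v = w"
      using positive_equilibria_le[OF L \<mu>] w by (meson antisym vec_eq_iff)
  qed
  then show ?thesis
    unfolding wstar_def by (rule theI')
qed

lemma wstar_bounds:
  fixes L :: "real^'n^'n"
  assumes L: "metzler L" and ker: "L *v \<theta> = 0" and \<theta>: "strictly_pos \<theta>" and \<mu>: "0 < \<mu>"
    and m: "0 < m" and r_bounds: "\<And>i. m * \<theta>$i \<le> r$i \<and> r$i \<le> M * \<theta>$i"
  shows "m * \<theta>$i \<le> wstar L \<mu> r $ i \<and> wstar L \<mu> r $ i \<le> M * \<theta>$i"
proof -
  have "strictly_pos r"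
    using r_bounds m \<theta> unfolding strictly_pos_def by (meson less_le_trans mult_pos_pos)
  then have "strictly_pos (wstar L \<mu> r)" "is_equilibrium L \<mu> r (wstar L \<mu> r)"
    using wstar_positive_equilibrium[OF L ker \<theta> _ \<mu>] by auto
  then show ?thesis
    using positive_equilibrium_le[OF L ker \<theta>] positive_equilibrium_ge[OF L ker \<theta>] \<mu> r_bounds
    by (meson less_imp_le)
qed

lemma tendsto_at_right_0_of_norm_le:
  fixes f :: "real \<Rightarrow> 'a::real_normed_vector"
  assumes "\<And>\<mu>. 0 < \<mu> \<Longrightarrow> norm (f \<mu> - l) \<le> \<mu> * K"
  shows "(f \<longlongrightarrow> l) (at_right 0)"
proof -
  have "((\<lambda>\<mu>. \<mu> * K) \<longlongrightarrow> 0 * K) (at_right 0)"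
    by (intro tendsto_intros)
  then have lim: "((\<lambda>\<mu>. \<mu> * K) \<longlongrightarrow> 0) (at_right 0)"
    by simp
  have "eventually (\<lambda>\<mu>. norm (f \<mu> - l) \<le> \<mu> * K) (at_right 0)"
    using eventually_at_right_less[of 0] by (rule eventually_mono) (use assms in auto)
  then have "((\<lambda>\<mu>. f \<mu> - l) \<longlongrightarrow> 0) (at_right 0)"
    using lim by (rule Lim_null_comparison)
  then show ?thesis
    by (simp add: Lim_null[symmetric])
qed

lemma tendsto_at_top_of_norm_le:
  fixes f :: "real \<Rightarrow> 'a::real_normed_vector"
  assumes "\<And>\<mu>. 0 < \<mu> \<Longrightarrow> norm (f \<mu> - l) \<le> K / \<mu>"
  shows "(f \<longlongrightarrow> l) at_top"
proof -
  have "eventually (\<lambda>\<mu>. norm (f \<mu> - l) \<le> K / \<mu>) at_top"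
    using eventually_gt_at_top[of 0] by (rule eventually_mono) (use assms in auto)
  moreover have "((\<lambda>\<mu>. K / \<mu>) \<longlongrightarrow> 0) at_top"
    by (rule real_tendsto_divide_at_top[OF tendsto_const filterlim_ident])
  ultimately have "((\<lambda>\<mu>. f \<mu> - l) \<longlongrightarrow> 0) at_top"
    by (rule Lim_null_comparison)
  then show ?thesis
    by (simp add: Lim_null[symmetric])
qed

lemma wstar_tendsto_at_right_0:
  fixes L :: "real^'n^'n"
  assumes L: "metzler L" and ker: "L *v \<theta> = 0" and \<theta>: "strictly_pos \<theta>" and r: "strictly_pos r"
  shows "((\<lambda>\<mu>. wstar L \<mu> r) \<longlongrightarrow> r) (at_right 0)"
proof (rule vec_tendstoI)
  fix i
  obtain m M where m: "0 < m" and r_bounds: "\<And>i. m * \<theta>$i \<le> r$i \<and> r$i \<le> M * \<theta>$i"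
    using strictly_pos_ratio_bounds[OF \<theta> r] by blast
  obtain K where K: "\<And>x. norm (L *v x) \<le> norm x * K" "0 < K"
    using bounded_linear.pos_bounded[OF matrix_vector_mul_bounded_linear] by blast
  have \<theta>_pos: "0 < \<theta>$j" for j using \<theta> by (simp add: strictly_pos_def)
  show "((\<lambda>\<mu>. wstar L \<mu> r $ i) \<longlongrightarrow> r$i) (at_right 0)"
  proof (rule tendsto_at_right_0_of_norm_le)
    fix \<mu> :: real assume \<mu>: "0 < \<mu>"
    define w where "w = wstar L \<mu> r"
    have w_bounds: "m * \<theta>$j \<le> w$j \<and> w$j \<le> M * \<theta>$j" for j
      using wstar_bounds[OF L ker \<theta> \<mu> m r_bounds] by (simp add: w_def)
    have m\<theta>_pos: "0 < m * \<theta>$j" for j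
      using m \<theta>_pos by simp
    have "is_equilibrium L \<mu> r w"
      using wstar_positive_equilibrium[OF L ker \<theta> r \<mu>] by (simp add: w_def)
    moreover have "0 \<le> w$i"
      using w_bounds[of i] m\<theta>_pos[of i] by linarith
    ultimately have "w$i * \<bar>w$i - r$i\<bar> = \<mu> * \<bar>(L *v w)$i\<bar>"
      using is_equilibrium_abs_diffusion[of L \<mu> r w i] \<mu> by simp
    also have "\<dots> \<le> \<mu> * (norm w * K)"
      using component_le_norm_cart[of "L *v w" i] K(1)[of w] \<mu> by simp
    also have "\<dots> \<le> \<mu> * (norm (M *\<^sub>R \<theta>) * K)"
    proof -
      have "\<bar>w$j\<bar> \<le> \<bar>M * \<theta>$j\<bar>" for j
        using w_bounds[of j] m\<theta>_pos[of j] by linarith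
      then have "norm w \<le> norm (M *\<^sub>R \<theta>)"
        by (intro norm_le_componentwise_cart) simp
      then show ?thesis
        using \<mu> K(2) by simp
    qed
    finally have "(m * \<theta>$i) * \<bar>w$i - r$i\<bar> \<le> \<mu> * (norm (M *\<^sub>R \<theta>) * K)"
      using mult_right_mono[of "m * \<theta>$i" "w$i" "\<bar>w$i - r$i\<bar>"] w_bounds[of i] by linarith
    then show "norm (w$i - r$i) \<le> \<mu> * (norm (M *\<^sub>R \<theta>) * K / (m * \<theta>$i))"
      using m\<theta>_pos[of i] by (simp add: pos_le_divide_eq mult.commute mult.left_commute)
  qed
qed

text \<open>Shifting v by a multiple of \<theta> so that v/\<theta> attains the maximum 0, the rows through the
  zero set of the shifted vector must vanish outside it; irreducibility makes that set everything.\<close>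
lemma metzler_irreducible_kernel:
  fixes L :: "real^'n^'n"
  assumes L: "metzler L" and irr: "irreducible_mat L" and \<theta>: "strictly_pos \<theta>"
    and ker: "L *v \<theta> = 0" and v: "L *v v = 0"
  shows "\<exists>t. v = t *\<^sub>R \<theta>"
proof -
  have \<theta>_pos: "0 < \<theta>$j" for j using \<theta> by (simp add: strictly_pos_def)
  obtain i0 where ratio: "\<And>j. v$j * \<theta>$i0 \<le> v$i0 * \<theta>$j"
    using metzler_max_ratio[OF L \<theta>] by blast
  define t where "t = v$i0 / \<theta>$i0"
  define u where "u = v - t *\<^sub>R \<theta>"
  have u_nonpos: "u$j \<le> 0" for j
    using ratio[of j] \<theta>_pos[of i0] \<theta>_pos[of j]
    by (simp add: u_def t_def field_simps mult.commute)
  have "u$i0 = 0"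
    using \<theta>_pos[of i0] by (simp add: u_def t_def)
  have "L *v u = 0"
    using v ker by (simp add: u_def matrix_vector_mult_diff_distrib matrix_vector_mult_scaleR)
  then have Lu: "(\<Sum>k\<in>UNIV. L$i$k * u$k) = 0" for i
    by (simp add: matrix_vector_mult_def vec_eq_iff)
  define S where "S = {j. u$j = 0}"
  have "\<forall>i\<in>S. \<forall>j\<in>UNIV - S. L$i$j = 0"
  proof (intro ballI)
    fix i j assume "i \<in> S" and "j \<in> UNIV - S"
    have "\<forall>k\<in>UNIV. L$i$k * u$k \<le> 0"
    proof
      fix k
      show "L$i$k * u$k \<le> 0"
        using L u_nonpos[of k] \<open>i \<in> S\<close>
        by (cases "k = i") (auto simp: metzler_def S_def mult_nonneg_nonpos)
    qed
    then have "\<forall>k\<in>UNIV. L$i$k * u$k = 0"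
      using Lu[of i] sum_nonneg_eq_0_iff[of UNIV "\<lambda>k. - (L$i$k * u$k)"] by (simp add: sum_negf)
    then show "L$i$j = 0"
      using \<open>j \<in> UNIV - S\<close> by (auto simp: S_def)
  qed
  moreover have "S \<noteq> {}"
    using \<open>u$i0 = 0\<close> by (auto simp: S_def)
  ultimately have "S = UNIV"
    using irr unfolding irreducible_mat_def by blast
  then have "v = t *\<^sub>R \<theta>"
    by (auto simp: S_def u_def vec_eq_iff)
  then show ?thesis ..
qed

text \<open>Since ker L is spanned by \<theta> and the columns of L sum to zero, adding the total mass
  times \<theta> makes L invertible.\<close>
lemma metzler_irreducible_bounded_below:
  fixes L :: "real^'n^'n"
  assumes L: "metzler L" and irr: "irreducible_mat L" and \<theta>: "strictly_pos \<theta>"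
    and ker: "L *v \<theta> = 0" and col: "\<And>j. (\<Sum>i\<in>UNIV. L$i$j) = 0"
  obtains B where "0 < B" and "\<And>v. B * norm v \<le> norm (L *v v + (\<Sum>j\<in>UNIV. v$j) *\<^sub>R \<theta>)"
proof -
  let ?T = "\<lambda>v. L *v v + (\<Sum>j\<in>UNIV. v$j) *\<^sub>R \<theta>"
  have lin: "linear ?T"
    by (intro linear_compose_add matrix_vector_mul_linear)
      (simp add: linear_iff sum.distrib scaleR_add_left sum_distrib_left)
  have "0 < (\<Sum>i\<in>UNIV. \<theta>$i)"
    using \<theta> by (simp add: strictly_pos_def sum_pos)
  have "inj ?T"
    unfolding linear_injective_0[OF lin]
  proof (intro allI impI)
    fix v assume T0: "?T v = 0"
    let ?s = "\<Sum>j\<in>UNIV. v$j"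
    have "(\<Sum>i\<in>UNIV. (?T v)$i) = 0"
      using T0 by simp
    then have "?s * (\<Sum>i\<in>UNIV. \<theta>$i) = 0"
      using sum_matrix_vector_mult_eq_0[OF col, of v] by (simp add: sum.distrib sum_distrib_left)
    then have "?s = 0"
      using \<open>0 < (\<Sum>i\<in>UNIV. \<theta>$i)\<close> by simp
    then obtain t where t: "v = t *\<^sub>R \<theta>"
      using T0 metzler_irreducible_kernel[OF L irr \<theta> ker] by auto
    then have "t * (\<Sum>i\<in>UNIV. \<theta>$i) = 0"
      using \<open>?s = 0\<close> by (simp add: sum_distrib_left)
    then show "v = 0"
      using t \<open>0 < (\<Sum>i\<in>UNIV. \<theta>$i)\<close> by simp
  qed
  then show thesis
    using linear_inj_bounded_below_pos[OF lin] that by blast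
qed

lemma equilibrium_logistic_sum_eq_0:
  fixes L :: "real^'n^'n"
  assumes col: "\<And>j. (\<Sum>i\<in>UNIV. L$i$j) = 0" and eq: "is_equilibrium L \<mu> r w"
  shows "(\<Sum>i\<in>UNIV. w$i * (r$i - w$i)) = 0"
proof -
  have "w$i * (r$i - w$i) = - (\<mu> * (L *v w)$i)" for i
    using eq by (simp add: is_equilibrium_iff algebra_simps)
  then have "(\<Sum>i\<in>UNIV. w$i * (r$i - w$i)) = - \<mu> * (\<Sum>i\<in>UNIV. (L *v w)$i)"
    by (simp add: sum_negf sum_distrib_left)
  then show ?thesis
    using sum_matrix_vector_mult_eq_0[OF col] by simp
qed

lemma equilibrium_dist_span_le:
  fixes L :: "real^'n^'n"
  assumes ker: "L *v \<theta> = 0" and \<theta>_sum: "(\<Sum>i\<in>UNIV. \<theta>$i) = 1"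
    and B: "0 < B" "\<And>v. B * norm v \<le> norm (L *v v + (\<Sum>j\<in>UNIV. v$j) *\<^sub>R \<theta>)"
    and \<mu>: "0 < \<mu>" and eq: "is_equilibrium L \<mu> r w"
    and w_bounds: "\<And>i. 0 \<le> w$i \<and> w$i \<le> M * \<theta>$i" and r: "\<And>i. 0 \<le> r$i"
  shows "norm (w - (\<Sum>j\<in>UNIV. w$j) *\<^sub>R \<theta>) \<le> (\<Sum>i\<in>UNIV. M * \<theta>$i * (r$i + M * \<theta>$i)) / (B * \<mu>)"
proof -
  define v where "v = w - (\<Sum>j\<in>UNIV. w$j) *\<^sub>R \<theta>"
  have "(\<Sum>j\<in>UNIV. v$j) = 0"
    using \<theta>_sum by (simp add: v_def sum_subtractf sum_distrib_left[symmetric])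
  then have Tv: "L *v v + (\<Sum>j\<in>UNIV. v$j) *\<^sub>R \<theta> = L *v w"
    using ker by (simp add: v_def matrix_vector_mult_diff_distrib matrix_vector_mult_scaleR)
  have row: "\<bar>(L *v w)$i\<bar> \<le> M * \<theta>$i * (r$i + M * \<theta>$i) / \<mu>" for i
  proof -
    have "\<mu> * \<bar>(L *v w)$i\<bar> = w$i * \<bar>w$i - r$i\<bar>"
      using is_equilibrium_abs_diffusion[OF eq] \<mu> w_bounds[of i] by simp
    also have "\<dots> \<le> (M * \<theta>$i) * (r$i + M * \<theta>$i)"
      using w_bounds[of i] r[of i] by (intro mult_mono) auto
    finally show ?thesis
      using \<mu> by (simp add: pos_le_divide_eq mult.commute)
  qed
  have "B * norm v \<le> norm (L *v w)"
    using B(2)[of v] by (simp add: Tv)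
  also have "\<dots> \<le> (\<Sum>i\<in>UNIV. \<bar>(L *v w)$i\<bar>)"
    by (rule norm_le_l1_cart)
  also have "\<dots> \<le> (\<Sum>i\<in>UNIV. M * \<theta>$i * (r$i + M * \<theta>$i) / \<mu>)"
    by (intro sum_mono row)
  finally have "B * norm v \<le> (\<Sum>i\<in>UNIV. M * \<theta>$i * (r$i + M * \<theta>$i)) / \<mu>"
    by (simp add: sum_divide_distrib)
  then show ?thesis
    using B(1) \<mu> by (simp add: v_def pos_le_divide_eq field_simps)
qed

lemma logistic_sum_shift_identity:
  fixes w \<theta> r :: "real^'n"
  shows "(\<Sum>i\<in>UNIV. w$i * (r$i - w$i)) + (\<Sum>i\<in>UNIV. (w - s *\<^sub>R \<theta>)$i * (s * \<theta>$i - r$i + w$i))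
    = s * ((\<Sum>i\<in>UNIV. \<theta>$i * r$i) - s * (\<Sum>i\<in>UNIV. (\<theta>$i)\<^sup>2))"
proof -
  have "(\<Sum>i\<in>UNIV. w$i * (r$i - w$i)) + (\<Sum>i\<in>UNIV. (w - s *\<^sub>R \<theta>)$i * (s * \<theta>$i - r$i + w$i))
      = (\<Sum>i\<in>UNIV. w$i * (r$i - w$i) + (w - s *\<^sub>R \<theta>)$i * (s * \<theta>$i - r$i + w$i))"
    by (simp add: sum.distrib)
  also have "\<dots> = (\<Sum>i\<in>UNIV. s * (\<theta>$i * r$i) - s * (s * (\<theta>$i)\<^sup>2))"
    by (rule sum.cong) (simp_all add: algebra_simps power2_eq_square)
  also have "\<dots> = s * ((\<Sum>i\<in>UNIV. \<theta>$i * r$i) - s * (\<Sum>i\<in>UNIV. (\<theta>$i)\<^sup>2))"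
    by (simp add: sum_subtractf sum_distrib_left right_diff_distrib)
  finally show ?thesis .
qed

lemma abs_sum_sub_weighted_mean_le:
  fixes w \<theta> r :: "real^'n"
  assumes balance: "(\<Sum>i\<in>UNIV. w$i * (r$i - w$i)) = 0"
    and \<theta>: "strictly_pos \<theta>" and \<theta>_sum: "(\<Sum>i\<in>UNIV. \<theta>$i) = 1"
    and m: "0 < m" "m \<le> (\<Sum>j\<in>UNIV. w$j)"
    and w_bounds: "\<And>i. 0 \<le> w$i \<and> w$i \<le> M * \<theta>$i" and r: "\<And>i. 0 \<le> r$i"
  shows "\<bar>(\<Sum>j\<in>UNIV. w$j) - (\<Sum>i\<in>UNIV. \<theta>$i * r$i) / (\<Sum>i\<in>UNIV. (\<theta>$i)\<^sup>2)\<bar>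
    \<le> norm (w - (\<Sum>j\<in>UNIV. w$j) *\<^sub>R \<theta>) * (\<Sum>i\<in>UNIV. r$i + 2 * M * \<theta>$i)
        / (m * (\<Sum>i\<in>UNIV. (\<theta>$i)\<^sup>2))"
proof -
  define s where "s = (\<Sum>j\<in>UNIV. w$j)"
  define P where "P = (\<Sum>i\<in>UNIV. \<theta>$i * r$i)"
  define Q where "Q = (\<Sum>i\<in>UNIV. (\<theta>$i)\<^sup>2)"
  define v where "v = w - s *\<^sub>R \<theta>"
  have \<theta>_pos: "0 < \<theta>$i" for i using \<theta> by (simp add: strictly_pos_def)
  have Q_pos: "0 < Q"
    unfolding Q_def using \<theta>_pos by (intro sum_pos) (auto simp: less_imp_neq[symmetric])
  have "s \<le> (\<Sum>j\<in>UNIV. M * \<theta>$j)"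
    unfolding s_def using w_bounds by (intro sum_mono) auto
  then have s_le: "s \<le> M"
    using \<theta>_sum by (simp add: sum_distrib_left[symmetric])
  have "\<bar>s * (P - s * Q)\<bar> = \<bar>\<Sum>i\<in>UNIV. v$i * (s * \<theta>$i - r$i + w$i)\<bar>"
    using logistic_sum_shift_identity[of w r s \<theta>] balance by (simp add: P_def Q_def v_def)
  also have "\<dots> \<le> (\<Sum>i\<in>UNIV. norm v * (r$i + 2 * M * \<theta>$i))"
  proof (rule order_trans[OF sum_abs sum_mono])
    fix i
    have "0 \<le> s * \<theta>$i" "s * \<theta>$i \<le> M * \<theta>$i"
      using m s_def s_le \<theta>_pos[of i] by (simp_all add: mult_right_mono)
    then have "\<bar>s * \<theta>$i - r$i + w$i\<bar> \<le> r$i + 2 * M * \<theta>$i"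
      using w_bounds[of i] r[of i] by linarith
    then show "\<bar>v$i * (s * \<theta>$i - r$i + w$i)\<bar> \<le> norm v * (r$i + 2 * M * \<theta>$i)"
      unfolding abs_mult by (intro mult_mono component_le_norm_cart) auto
  qed
  finally have "s * \<bar>P - s * Q\<bar> \<le> norm v * (\<Sum>i\<in>UNIV. r$i + 2 * M * \<theta>$i)"
    using m s_def by (simp add: abs_mult sum_distrib_left)
  moreover have "m * \<bar>P - s * Q\<bar> \<le> s * \<bar>P - s * Q\<bar>"
    using m s_def by (simp add: mult_right_mono)
  moreover have "\<bar>s - P / Q\<bar> = \<bar>P - s * Q\<bar> / Q"
  proof -
    have "s - P / Q = - (P - s * Q) / Q"
      using Q_pos by (simp add: field_simps)
    then show ?thesis
      using Q_pos by simp
  qed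
  ultimately show ?thesis
    using m Q_pos by (simp add: s_def P_def Q_def v_def field_simps)
qed

lemma equilibrium_dist_weighted_mean_le:
  fixes L :: "real^'n^'n"
  assumes ker: "L *v \<theta> = 0" and col: "\<And>j. (\<Sum>i\<in>UNIV. L$i$j) = 0"
    and \<theta>: "strictly_pos \<theta>" and \<theta>_sum: "(\<Sum>i\<in>UNIV. \<theta>$i) = 1"
    and B: "0 < B" "\<And>v. B * norm v \<le> norm (L *v v + (\<Sum>j\<in>UNIV. v$j) *\<^sub>R \<theta>)"
    and \<mu>: "0 < \<mu>" and eq: "is_equilibrium L \<mu> r w"
    and m: "0 < m" and w_bounds: "\<And>i. m * \<theta>$i \<le> w$i \<and> w$i \<le> M * \<theta>$i"
    and r: "\<And>i. 0 \<le> r$i"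
  shows "norm (w - ((\<Sum>i\<in>UNIV. \<theta>$i * r$i) / (\<Sum>i\<in>UNIV. (\<theta>$i)\<^sup>2)) *\<^sub>R \<theta>)
    \<le> (\<Sum>i\<in>UNIV. M * \<theta>$i * (r$i + M * \<theta>$i)) / (B * \<mu>)
        * ((\<Sum>i\<in>UNIV. r$i + 2 * M * \<theta>$i) * norm \<theta> / (m * (\<Sum>i\<in>UNIV. (\<theta>$i)\<^sup>2)) + 1)"
    (is "_ \<le> ?C * ?D")
proof -
  define s where "s = (\<Sum>j\<in>UNIV. w$j)"
  define c where "c = (\<Sum>i\<in>UNIV. \<theta>$i * r$i) / (\<Sum>i\<in>UNIV. (\<theta>$i)\<^sup>2)"
  have w_bounds': "0 \<le> w$i \<and> w$i \<le> M * \<theta>$i" for i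
    using w_bounds[of i] m \<theta> mult_pos_pos[of m "\<theta>$i"] unfolding strictly_pos_def
    by (meson less_le_trans less_imp_le)
  have "m \<le> s"
  proof -
    have "(\<Sum>j\<in>UNIV. m * \<theta>$j) \<le> s"
      unfolding s_def using w_bounds by (intro sum_mono) auto
    then show ?thesis
      using \<theta>_sum by (simp add: sum_distrib_left[symmetric])
  qed
  have s_c: "\<bar>s - c\<bar> \<le> norm (w - s *\<^sub>R \<theta>) * (\<Sum>i\<in>UNIV. r$i + 2 * M * \<theta>$i)
      / (m * (\<Sum>i\<in>UNIV. (\<theta>$i)\<^sup>2))"
    using abs_sum_sub_weighted_mean_le[OF equilibrium_logistic_sum_eq_0[OF col eq] \<theta> \<theta>_sum m
        \<open>m \<le> s\<close>[unfolded s_def] w_bounds' r]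
    by (simp add: s_def c_def)
  have "0 \<le> r$i + 2 * M * \<theta>$i" for i
    using r[of i] w_bounds'[of i] by linarith
  then have "0 \<le> (\<Sum>i\<in>UNIV. r$i + 2 * M * \<theta>$i)"
    by (intro sum_nonneg)
  moreover have "0 \<le> (\<Sum>i\<in>UNIV. (\<theta>$i)\<^sup>2)"
    by (simp add: sum_nonneg)
  ultimately have D_nonneg: "0 \<le> ?D"
    using m by (intro add_nonneg_nonneg divide_nonneg_nonneg mult_nonneg_nonneg) auto
  have "w - c *\<^sub>R \<theta> = (s - c) *\<^sub>R \<theta> + (w - s *\<^sub>R \<theta>)"
    by (simp add: algebra_simps)
  then have "norm (w - c *\<^sub>R \<theta>) \<le> \<bar>s - c\<bar> * norm \<theta> + norm (w - s *\<^sub>R \<theta>)"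
    by (metis norm_scaleR norm_triangle_ineq)
  also have "\<dots> \<le> norm (w - s *\<^sub>R \<theta>) * ?D"
    using mult_right_mono[OF s_c norm_ge_zero[of \<theta>]] by (simp add: algebra_simps)
  also have "\<dots> \<le> ?C * ?D"
    unfolding s_def using equilibrium_dist_span_le[OF ker \<theta>_sum B \<mu> eq w_bounds' r] D_nonneg
    by (rule mult_right_mono)
  finally show ?thesis
    by (simp add: c_def)
qed

lemma wstar_tendsto_at_top:
  fixes L :: "real^'n^'n"
  assumes L: "metzler L" and irr: "irreducible_mat L" and \<theta>: "strictly_pos \<theta>"
    and ker: "L *v \<theta> = 0" and col: "\<And>j. (\<Sum>i\<in>UNIV. L$i$j) = 0"
    and \<theta>_sum: "(\<Sum>i\<in>UNIV. \<theta>$i) = 1" and r: "strictly_pos r"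
  shows "((\<lambda>\<mu>. wstar L \<mu> r) \<longlongrightarrow>
           ((\<Sum>i\<in>UNIV. \<theta>$i * r$i) / (\<Sum>i\<in>UNIV. (\<theta>$i)\<^sup>2)) *\<^sub>R \<theta>) at_top"
proof -
  obtain m M where m: "0 < m" and r_bounds: "\<And>i. m * \<theta>$i \<le> r$i \<and> r$i \<le> M * \<theta>$i"
    using strictly_pos_ratio_bounds[OF \<theta> r] by blast
  obtain B where B: "0 < B" "\<And>v. B * norm v \<le> norm (L *v v + (\<Sum>j\<in>UNIV. v$j) *\<^sub>R \<theta>)"
    using metzler_irreducible_bounded_below[OF L irr \<theta> ker col] by blast
  have r_nonneg: "0 \<le> r$i" for i
    using r by (simp add: strictly_pos_def less_imp_le)
  have "norm (wstar L \<mu> r - ((\<Sum>i\<in>UNIV. \<theta>$i * r$i) / (\<Sum>i\<in>UNIV. (\<theta>$i)\<^sup>2)) *\<^sub>R \<theta>)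
    \<le> (\<Sum>i\<in>UNIV. M * \<theta>$i * (r$i + M * \<theta>$i)) / B
        * ((\<Sum>i\<in>UNIV. r$i + 2 * M * \<theta>$i) * norm \<theta> / (m * (\<Sum>i\<in>UNIV. (\<theta>$i)\<^sup>2)) + 1) / \<mu>"
    if \<mu>: "0 < \<mu>" for \<mu>
    using equilibrium_dist_weighted_mean_le[OF ker col \<theta> \<theta>_sum B \<mu>
        wstar_positive_equilibrium[OF L ker \<theta> r \<mu>, THEN conjunct2] m
        wstar_bounds[OF L ker \<theta> \<mu> m r_bounds] r_nonneg]
    by (simp add: field_simps)
  then show ?thesis
    by (rule tendsto_at_top_of_norm_le)
qed

theorem mainTheorem10:
  fixes A :: "real^'n^'n" and p \<theta> :: "real^'n"
  assumes n2: "CARD('n) \<ge> 2"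
    and A_nonneg: "\<forall>i j. i \<noteq> j \<longrightarrow> A $ i $ j \<ge> 0"
    and irr: "irreducible_mat (connection_matrix A)"
    and p_pos: "strictly_pos p"
    and theta_pos: "strictly_pos \<theta>"
    and theta_ker: "connection_matrix A *v \<theta> = 0"
    and theta_sum: "(\<Sum>i\<in>UNIV. \<theta> $ i) = 1"
  shows "(\<exists>m M. 0 < m \<and> m \<le> M \<and>
            (\<forall>\<mu>>0. \<forall>i. m * \<theta> $ i \<le> wstar (connection_matrix A) \<mu> p $ i
                     \<and> wstar (connection_matrix A) \<mu> p $ i \<le> M * \<theta> $ i))
         \<and> ((\<lambda>\<mu>. wstar (connection_matrix A) \<mu> p) \<longlongrightarrow> p) (at_right 0)
         \<and> ((\<lambda>\<mu>. wstar (connection_matrix A) \<mu> p) \<longlongrightarrow>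
               ((\<Sum>i\<in>UNIV. \<theta> $ i * p $ i) / (\<Sum>i\<in>UNIV. (\<theta> $ i)^2)) *\<^sub>R \<theta>) at_top"
proof -
  have L: "metzler (connection_matrix A)"
    using A_nonneg by (rule metzler_connection_matrix)
  obtain m M where m: "0 < m" "m \<le> M" and p_bounds: "\<And>i. m * \<theta>$i \<le> p$i \<and> p$i \<le> M * \<theta>$i"
    using strictly_pos_ratio_bounds[OF theta_pos p_pos] by blast
  have "\<forall>\<mu>>0. \<forall>i. m * \<theta> $ i \<le> wstar (connection_matrix A) \<mu> p $ i
                  \<and> wstar (connection_matrix A) \<mu> p $ i \<le> M * \<theta> $ i"
    using wstar_bounds[OF L theta_ker theta_pos _ m(1) p_bounds] by blast
  moreover note wstar_tendsto_at_right_0[OF L theta_ker theta_pos p_pos]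
  moreover note wstar_tendsto_at_top[OF L irr theta_pos theta_ker column_sum_connection_matrix
      theta_sum p_pos]
  ultimately show ?thesis
    using m by blast
qed

end
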